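(* Let $M\ge1$ be an integer and $P_{\max},\sigma^2,\beta>0$, $b\ge1$, and $c_b=\frac{2^b}{\pi}\sin\frac{\pi}{2^b}$. For $N>0$ and $K\in\{1,\dots,M\}$ define $$R_s^{\mathrm D}(K)=K\log_2\!\left(1+\frac{P_{\max}MN^2\beta c_b^2}{K^3\sigma^2}\right),\qquad R_s^{\mathrm C}=\log_2\!\left(1+\frac{P_{\max}MN^2\beta c_b^2}{\sigma^2}\right).$$ The equation $g(x):=\ln(1+x)-3+\frac{3}{1+x}=0$ has a unique solution $C_{\mathrm{th}}$ in $(0,\infty)$. Moreover, (i) if $N\le\sqrt{\frac{C_{\mathrm{th}}\sigma^2}{P_{\max}M\beta c_b^2}}$, then $R_s^{\mathrm D}(K)\le R_s^{\mathrm C}$ for all $K\in\{1,\dots,M\}$; (ii) if $N\ge M\sqrt{\frac{C_{\mathrm{th}}\sigma^2}{P_{\max}\beta c_b^2}}$, then $R_s^{\mathrm D}(K)\ge R_s^{\mathrm C}$ for all $K\in\{1,\dots,M\}$.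
   Context: Interpretation: $R_s^{\mathrm D}(K)$ and $R_s^{\mathrm C}$ are the maximum sum-rates of an $M$-antenna base station serving $K$ users aided by $N$ IRS elements with $b$-bit phase quantization, under a distributed-IRS deployment (K IRSs of $N/K$ elements each, one per user) and a centralized-IRS deployment (one $N$-element IRS), respectively, with pure line-of-sight homogeneous channels of common two-hop path loss $\beta=(\rho_{g,1}\rho_{r,1})^2$, transmit power $P_{\max}$ and noise power $\sigma^2$. *)

theory Defs
  imports Complex_Main
begin

definition c_b :: "nat \<Rightarrow> real" where
  "c_b b = (2 ^ b / pi) * sin (pi / 2 ^ b)"

definition Rs_D :: "real \<Rightarrow> nat \<Rightarrow> real \<Rightarrow> real \<Rightarrow> nat \<Rightarrow> real \<Rightarrow> nat \<Rightarrow> real" where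
  "Rs_D Pmax M N beta b sigma2 K =
     real K * log 2 (1 + Pmax * real M * N^2 * beta * (c_b b)^2 / ((real K)^3 * sigma2))"

definition Rs_C :: "real \<Rightarrow> nat \<Rightarrow> real \<Rightarrow> real \<Rightarrow> nat \<Rightarrow> real \<Rightarrow> real" where
  "Rs_C Pmax M N beta b sigma2 =
     log 2 (1 + Pmax * real M * N^2 * beta * (c_b b)^2 / sigma2)"

definition g_th :: "real \<Rightarrow> real" where
  "g_th x = ln (1 + x) - 3 + 3 / (1 + x)"

definition C_th :: real where
  "C_th = (THE x. 0 < x \<and> g_th x = 0)"

end

theory Submission
  imports Defs
begin

text \<open>
  With \<open>x\<close> the centralized SNR, the distributed rate is, up to the factor \<open>1 / ln 2\<close>,
  \<open>f(K) = K ln (1 + x / K\<^sup>3)\<close>, and \<open>f'(t) = g_th (x / t\<^sup>3)\<close>. The function \<open>g_th\<close> vanishes at 0,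
  decreases on \<open>[0, 2]\<close> and increases on \<open>[2, \<infinity>)\<close>, where it becomes positive, so it is negative on
  \<open>(0, C_th)\<close> and positive beyond \<open>C_th\<close>. Hence \<open>f\<close> is nonincreasing on \<open>[1, K]\<close> when
  \<open>x \<le> C_th\<close> and nondecreasing when \<open>x \<ge> K\<^sup>3 C_th\<close>; comparing \<open>f(K)\<close> with \<open>f(1)\<close> gives (i)
  and (ii).
\<close>

lemma has_real_derivative_g_th:
  assumes "x > -1"
  shows "(g_th has_real_derivative (x - 2) / (1 + x)^2) (at x)"
proof -
  have "(g_th has_real_derivative 1 / (1 + x) - 3 / (1 + x)^2) (at x)"
    unfolding g_th_def[abs_def] using assms
    by (auto intro!: derivative_eq_intros simp: power2_eq_square)
  also have "1 / (1 + x) - 3 / (1 + x)^2 = (x - 2) / (1 + x)^2"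
    using assms by (simp add: divide_simps) (simp add: algebra_simps power2_eq_square)
  finally show ?thesis .
qed

lemma continuous_on_g_th: "continuous_on {0..} g_th"
  unfolding g_th_def[abs_def] by (auto intro!: continuous_intros)

lemma g_th_0: "g_th 0 = 0"
  by (simp add: g_th_def)

lemma g_th_neg:
  assumes "0 < x" "x \<le> 2"
  shows "g_th x < 0"
proof -
  have "g_th x < g_th 0"
  proof (rule DERIV_neg_imp_decreasing_open[OF assms(1)])
    fix z :: real assume "0 < z" "z < x"
    with assms show "\<exists>y. DERIV g_th z :> y \<and> y < 0"
      by (intro exI[of _ "(z - 2) / (1 + z)^2"] conjI has_real_derivative_g_th)
        (auto intro!: divide_neg_pos)
  next
    show "continuous_on {0..x} g_th"
      using continuous_on_g_th by (rule continuous_on_subset) auto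
  qed
  then show ?thesis by (simp add: g_th_0)
qed

lemma g_th_strict_increasing:
  assumes "2 \<le> x" "x < y"
  shows "g_th x < g_th y"
proof (rule DERIV_pos_imp_increasing_open[OF assms(2)])
  fix z :: real assume "x < z" "z < y"
  with assms show "\<exists>d. DERIV g_th z :> d \<and> d > 0"
    by (intro exI[of _ "(z - 2) / (1 + z)^2"] conjI has_real_derivative_g_th) auto
next
  show "continuous_on {x..y} g_th"
    using continuous_on_g_th by (rule continuous_on_subset) (use assms in auto)
qed

lemma g_th_unique_root: "\<exists>!x. 0 < x \<and> g_th x = 0"
proof -
  have "2 \<le> exp 3 - (1::real)"
    using exp_ge_add_one_self[of 3] by simp
  moreover have "g_th (exp 3 - 1) > 0"
    by (simp add: g_th_def)
  moreover have "continuous_on {2..exp 3 - 1} g_th"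
    using continuous_on_g_th by (rule continuous_on_subset) auto
  ultimately obtain x where x: "2 \<le> x" "g_th x = 0"
    using IVT'[of g_th 2 0 "exp 3 - 1"] g_th_neg[of 2] by auto
  have "y = x" if "0 < y" "g_th y = 0" for y
  proof -
    have "2 < y"
      using g_th_neg[of y] that by fastforce
    then show "y = x"
      using g_th_strict_increasing[of x y] g_th_strict_increasing[of y x] x that
      by (cases x y rule: linorder_cases) auto
  qed
  with x show ?thesis
    by (intro ex1I[of _ x]) auto
qed

lemma C_th_pos: "0 < C_th" and g_th_C_th: "g_th C_th = 0"
  using theI'[OF g_th_unique_root] by (simp_all add: C_th_def)

lemma C_th_gt_2: "2 < C_th"
  using g_th_neg[of C_th] C_th_pos g_th_C_th by fastforce

lemma g_th_nonpos:
  assumes "0 \<le> x" "x \<le> C_th"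
  shows "g_th x \<le> 0"
proof -
  consider "x = 0" | "0 < x" "x \<le> 2" | "2 < x" "x \<le> C_th"
    using assms by linarith
  then show ?thesis
  proof cases
    case 3
    then show ?thesis
      using g_th_strict_increasing[of x C_th] g_th_C_th by fastforce
  qed (simp_all add: g_th_0 g_th_neg less_imp_le)
qed

lemma g_th_nonneg:
  assumes "C_th \<le> x"
  shows "0 \<le> g_th x"
  using g_th_strict_increasing[of C_th x] C_th_gt_2 g_th_C_th assms by fastforce

definition distributed_rate :: "real \<Rightarrow> real \<Rightarrow> real" where
  "distributed_rate x t = t * ln (1 + x / t^3)"

lemma has_real_derivative_distributed_rate:
  assumes "0 < t" "0 \<le> x"
  shows "(distributed_rate x has_real_derivative g_th (x / t^3)) (at t)"
proof -
  have pos: "0 < 1 + x / t^3"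
    using assms by (simp add: add_pos_nonneg)
  have "(distributed_rate x has_real_derivative
          ln (1 + x / t^3) + t * (- (x * (3 * t^2)) / (t^3 * t^3)) / (1 + x / t^3)) (at t)"
    unfolding distributed_rate_def[abs_def] using assms pos
    by (auto intro!: derivative_eq_intros simp: power2_eq_square) (simp add: mult_ac)
  also have "t * (- (x * (3 * t^2)) / (t^3 * t^3)) / (1 + x / t^3) = - 3 + 3 / (1 + x / t^3)"
    using assms pos by (simp add: field_simps power2_eq_square power3_eq_cube)
  finally show ?thesis
    by (simp add: g_th_def algebra_simps)
qed

lemma distributed_rate_antimono:
  assumes "0 < s" "s \<le> t" "0 \<le> x" "x \<le> s^3 * C_th"
  shows "distributed_rate x t \<le> distributed_rate x s"
proof (rule DERIV_nonpos_imp_nonincreasing[OF assms(2)])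
  fix u assume u: "s \<le> u" "u \<le> t"
  have "x / u^3 \<le> x / s^3"
    using assms u by (intro divide_left_mono mult_pos_pos power_mono) auto
  also have "\<dots> \<le> C_th"
    using assms by (simp add: divide_le_eq mult.commute)
  finally have "g_th (x / u^3) \<le> 0"
    using assms u by (intro g_th_nonpos) auto
  then show "\<exists>y. DERIV (distributed_rate x) u :> y \<and> y \<le> 0"
    using has_real_derivative_distributed_rate[of u x] assms u by auto
qed

lemma distributed_rate_mono:
  assumes "0 < s" "s \<le> t" "t^3 * C_th \<le> x"
  shows "distributed_rate x s \<le> distributed_rate x t"
proof (rule DERIV_nonneg_imp_nondecreasing[OF assms(2)])
  fix u assume u: "s \<le> u" "u \<le> t"
  have "u^3 * C_th \<le> t^3 * C_th"
    using assms u C_th_pos by (intro mult_right_mono power_mono) auto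
  then have "C_th \<le> x / u^3"
    using assms u by (simp add: le_divide_eq mult.commute)
  then have "0 \<le> g_th (x / u^3)"
    by (rule g_th_nonneg)
  moreover have "0 \<le> t^3 * C_th"
    using assms C_th_pos by simp
  ultimately show "\<exists>y. DERIV (distributed_rate x) u :> y \<and> 0 \<le> y"
    using has_real_derivative_distributed_rate[of u x] assms u by fastforce
qed

lemma Rs_D_eq_distributed_rate:
  "Rs_D Pmax M N beta b sigma2 K =
     distributed_rate (Pmax * real M * N^2 * beta * (c_b b)^2 / sigma2) (real K) / ln 2"
  by (simp add: Rs_D_def distributed_rate_def log_def mult.commute)

lemma Rs_C_eq_distributed_rate:
  "Rs_C Pmax M N beta b sigma2 =
     distributed_rate (Pmax * real M * N^2 * beta * (c_b b)^2 / sigma2) 1 / ln 2"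
  by (simp add: Rs_C_def distributed_rate_def log_def)

lemma c_b_pos:
  assumes "1 \<le> b"
  shows "0 < c_b b"
proof -
  have "(2::real) ^ 1 \<le> 2 ^ b"
    using assms by (intro power_increasing) auto
  then have "sin (pi / 2 ^ b) > 0"
    by (intro sin_gt_zero) (auto simp: divide_less_eq)
  then show ?thesis
    by (simp add: c_b_def)
qed

lemma Rs_D_le_Rs_C:
  assumes "1 \<le> K" "0 \<le> Pmax * real M * N^2 * beta * (c_b b)^2 / sigma2"
    "Pmax * real M * N^2 * beta * (c_b b)^2 / sigma2 \<le> C_th"
  shows "Rs_D Pmax M N beta b sigma2 K \<le> Rs_C Pmax M N beta b sigma2"
  unfolding Rs_D_eq_distributed_rate Rs_C_eq_distributed_rate
  using assms by (intro divide_right_mono distributed_rate_antimono) auto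

lemma Rs_C_le_Rs_D:
  assumes "1 \<le> K" "real K^3 * C_th \<le> Pmax * real M * N^2 * beta * (c_b b)^2 / sigma2"
  shows "Rs_C Pmax M N beta b sigma2 \<le> Rs_D Pmax M N beta b sigma2 K"
  unfolding Rs_D_eq_distributed_rate Rs_C_eq_distributed_rate
  using assms by (intro divide_right_mono distributed_rate_mono) auto

lemma square_le_if_le_sqrt:
  fixes m c N :: real
  assumes "0 \<le> m" "m * sqrt c \<le> N"
  shows "m^2 * c \<le> N^2"
proof (cases "0 \<le> c")
  case True
  then have "(m * sqrt c)^2 \<le> N^2"
    using assms by (intro power_mono) auto
  with True show ?thesis
    by (simp add: power_mult_distrib)
next
  case False
  then have "m^2 * c \<le> 0"
    by (simp add: mult_nonneg_nonpos)
  then show ?thesis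
    using zero_le_power2[of N] by linarith
qed

theorem theorem1:
  fixes M b :: nat and Pmax sigma2 beta :: real
  assumes "M \<ge> 1" and "b \<ge> 1" and "Pmax > 0" and "sigma2 > 0" and "beta > 0"
  shows "(\<exists>!x. 0 < x \<and> g_th x = 0)
    \<and> (\<forall>N::real. 0 < N \<longrightarrow>
          N \<le> sqrt (C_th * sigma2 / (Pmax * real M * beta * (c_b b)^2)) \<longrightarrow>
          (\<forall>K\<in>{1..M}. Rs_D Pmax M N beta b sigma2 K \<le> Rs_C Pmax M N beta b sigma2))
    \<and> (\<forall>N::real. 0 < N \<longrightarrow>
          N \<ge> real M * sqrt (C_th * sigma2 / (Pmax * beta * (c_b b)^2)) \<longrightarrow>
          (\<forall>K\<in>{1..M}. Rs_D Pmax M N beta b sigma2 K \<ge> Rs_C Pmax M N beta b sigma2))"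
proof -
  have c: "0 < c_b b"
    using assms(2) by (rule c_b_pos)
  have small: "Rs_D Pmax M N beta b sigma2 K \<le> Rs_C Pmax M N beta b sigma2"
    if "0 < N" "N \<le> sqrt (C_th * sigma2 / (Pmax * real M * beta * (c_b b)^2))" "K \<in> {1..M}"
    for N K
  proof -
    have "N^2 \<le> C_th * sigma2 / (Pmax * real M * beta * (c_b b)^2)"
      using that by (intro sqrt_ge_absD) simp
    then show ?thesis
      using that assms c by (intro Rs_D_le_Rs_C) (auto simp: field_simps)
  qed
  have large: "Rs_C Pmax M N beta b sigma2 \<le> Rs_D Pmax M N beta b sigma2 K"
    if "real M * sqrt (C_th * sigma2 / (Pmax * beta * (c_b b)^2)) \<le> N" "K \<in> {1..M}" for N K
  proof -
    have "real M^2 * (C_th * sigma2 / (Pmax * beta * (c_b b)^2)) \<le> N^2"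
      using that by (intro square_le_if_le_sqrt) auto
    then have "real M^3 * C_th \<le> Pmax * real M * N^2 * beta * (c_b b)^2 / sigma2"
      using assms c by (simp add: field_simps power2_eq_square power3_eq_cube)
    moreover have "real K^3 * C_th \<le> real M^3 * C_th"
      using that C_th_pos by (intro mult_right_mono power_mono) auto
    ultimately show ?thesis
      using that by (intro Rs_C_le_Rs_D) auto
  qed
  show ?thesis
    using g_th_unique_root small large by blast
qed

end
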